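(* Let $n\ge 2$ be an integer and let $n_0,n_1$ be integers with $n=n_0+n_1$. The following are equivalent: (1) $(n_0,n_1)$ is a hypercubic bipartition (HCBP) of $n$; (2) $f(n)=n_1+f(n_1)+f(n_0)$ and $n_0\ge n_1\ge 1$; (3) $(n_0,n_1)=\left(\frac{n+d_i(n)}{2},\frac{n-d_i(n)}{2}\right)$ for some $i\in\{1,\dots,\lceil\log_2 n\rceil\}$.
   Context: Let $f:\mathbb{N}\to\mathbb{N}_0$ be defined by $f(1)=0$ and $f(n)=\lfloor n/2\rfloor+f(\lfloor n/2\rfloor)+f(\lceil n/2\rceil)$ for $n>1$. For $i\in\mathbb{N}$ and $n\in\mathbb{N}_0$ let $d_i(n)=2^{i-1}-\left|(n\bmod 2^i)-2^{i-1}\right|$. For $k\ge 0$ and $0\le m<2^k$, let $\beta_k(m)\in\{0,1\}^k$ be the point whose $j$-th coordinate is the binary digit of $m$ of weight $2^{k-j}$. For $n\ge 2$ put $k=\lceil\log_2 n\rceil$. A pair $(n_0,n_1)$ of integers with $n=n_0+n_1$ and $n_0\ge n_1\ge 1$ is a hypercubic bipartition (HCBP) of $n$ if there is $i\in\{1,\dots,k\}$ such that the hyperplane $x_i=1/2$ splits the $n$ points $\beta_k(0),\dots,\beta_k(n-1)$ into $n_0$ points on one side and $n_1$ on the other. *)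

theory Defs
  imports Complex_Main
begin

fun f :: "nat \<Rightarrow> nat" where
  "f n = (if n \<le> 1 then 0 else n div 2 + f (n div 2) + f (n - n div 2))"

text \<open>For n > 1, n - n div 2 is the ceiling of n/2. The value f 0 is irrelevant (set to 0).\<close>

definition d :: "nat \<Rightarrow> nat \<Rightarrow> int" where
  "d i n = 2^(i-1) - \<bar>int (n mod 2^i) - 2^(i-1)\<bar>"

text \<open>j-th coordinate (1 <= j <= k) of beta_k(m): binary digit of m of weight 2^(k-j).\<close>
definition beta :: "nat \<Rightarrow> nat \<Rightarrow> nat \<Rightarrow> nat" where
  "beta k m j = (m div 2^(k - j)) mod 2"

definition clog2 :: "nat \<Rightarrow> nat" where
  "clog2 n = nat \<lceil>log 2 (real n)\<rceil>"

text \<open>The hyperplane x_i = 1/2 splits the points into those with coordinate 0 and with 1;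
  the sides are unordered.\<close>
definition HCBP :: "nat \<Rightarrow> int \<Rightarrow> int \<Rightarrow> bool" where
  "HCBP n n0 n1 \<longleftrightarrow> int n = n0 + n1 \<and> n0 \<ge> n1 \<and> n1 \<ge> 1 \<and>
     (\<exists>i\<in>{1..clog2 n}.
        let A = {m. m < n \<and> beta (clog2 n) m i = 0};
            B = {m. m < n \<and> beta (clog2 n) m i = 1}
        in (int (card A) = n0 \<and> int (card B) = n1) \<or> (int (card A) = n1 \<and> int (card B) = n0))"

end

theory Submission
  imports Defs "HOL-Library.Log_Nat"
begin

text \<open>
  The defect g(a, b) = f(a + b) - f(a) - f(b) - min(a, b), below f_excess, obeys the parity
  recursions g(2x, 2y) = 2 g(x, y), g(2x, 2y + 1) = g(x, y) + g(x, y + 1) and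
  g(2x + 1, 2y + 1) = g(x + 1, y) + g(x, y + 1) + [x \<noteq> y], so by induction g \<ge> 0, with
  equality exactly when some 2^t divides a or b and |a - b| \<le> 2^t (dyadic_close).
  For a + b = n the latter says a - b = d_{t+1}(n). On the cube side, n - d_{j+1}(n) is twice
  the number of m < n whose binary digit of weight 2^j is 1, because d_{j+1}(m) moves by -1 or +1
  according to that digit; hence the hyperplane cuts are exactly the splits with
  n0 - n1 = d_i(n).
\<close>

lemma f_0 [simp]: "f 0 = 0"
  and f_Suc_0 [simp]: "f (Suc 0) = 0"
  by (subst f.simps, simp)+

declare f.simps [simp del]

lemma f_double: "f (2 * m) = m + 2 * f m"
  by (cases "m = 0") (subst f.simps, simp)+

lemma f_double_Suc: "f (2 * m + 1) = m + f m + f (m + 1)"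
  by (cases "m = 0") (subst f.simps, simp)+

definition f_excess :: "nat \<Rightarrow> nat \<Rightarrow> int" where
  "f_excess a b = int (f (a + b)) - int (f a) - int (f b) - int (min a b)"

lemma f_excess_commute: "f_excess a b = f_excess b a"
  unfolding f_excess_def by (simp add: add.commute min.commute)

lemma f_excess_0_left [simp]: "f_excess 0 b = 0"
  unfolding f_excess_def by simp

lemma f_excess_Suc_self: "f_excess (x + 1) x = 0"
  using f_double_Suc[of x] unfolding f_excess_def by (simp add: min_def mult_2)

lemma f_excess_double_double: "f_excess (2 * x) (2 * y) = 2 * f_excess x y"
  using f_double[of "x + y"] f_double[of x] f_double[of y]
  unfolding f_excess_def by (simp add: min_def distrib_left)

lemma f_excess_odd_odd:
  "f_excess (2 * x + 1) (2 * y + 1) = f_excess (x + 1) y + f_excess x (y + 1) + (if x = y then 0 else 1)"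
proof -
  have "2 * x + 1 + (2 * y + 1) = 2 * (x + y + 1)" by simp
  then show ?thesis
    using f_double[of "x + y + 1"] f_double_Suc[of x] f_double_Suc[of y]
    unfolding f_excess_def by (auto simp add: min_def)
qed

lemma f_excess_even_odd: "f_excess (2 * x) (2 * y + 1) = f_excess x y + f_excess x (y + 1)"
proof -
  have "2 * x + (2 * y + 1) = 2 * (x + y) + 1" by simp
  then show ?thesis
    using f_double_Suc[of "x + y"] f_double[of x] f_double_Suc[of y]
    unfolding f_excess_def by (auto simp add: min_def)
qed

definition dyadic_close :: "nat \<Rightarrow> nat \<Rightarrow> bool" where
  "dyadic_close a b \<longleftrightarrow> (\<exists>t. (2^t dvd a \<or> 2^t dvd b) \<and> a \<le> b + 2^t \<and> b \<le> a + 2^t)"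

lemma dyadic_close_commute: "dyadic_close a b \<longleftrightarrow> dyadic_close b a"
  unfolding dyadic_close_def by blast

lemma dyadic_close_0_left [simp]: "dyadic_close 0 b"
  unfolding dyadic_close_def by (intro exI[of _ b]) (simp add: less_imp_le)

lemma pow2_dvd_imp_even: "2^t dvd (m::nat) \<Longrightarrow> t \<noteq> 0 \<Longrightarrow> even m"
  by (metis dvd_power dvd_trans not_gr0)

lemma dyadic_close_double_double: "dyadic_close (2 * x) (2 * y) \<longleftrightarrow> dyadic_close x y"
proof
  assume "dyadic_close (2 * x) (2 * y)"
  then obtain t where t: "2^t dvd 2 * x \<or> 2^t dvd 2 * y" "2 * x \<le> 2 * y + 2^t" "2 * y \<le> 2 * x + 2^t"
    unfolding dyadic_close_def by blast
  show "dyadic_close x y"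
  proof (cases t)
    case 0
    then show ?thesis using t unfolding dyadic_close_def by (intro exI[of _ 0]) simp
  next
    case (Suc s)
    then show ?thesis using t unfolding dyadic_close_def by (intro exI[of _ s]) auto
  qed
next
  assume "dyadic_close x y"
  then obtain t where "2^t dvd x \<or> 2^t dvd y" "x \<le> y + 2^t" "y \<le> x + 2^t"
    unfolding dyadic_close_def by blast
  then show "dyadic_close (2 * x) (2 * y)"
    unfolding dyadic_close_def by (intro exI[of _ "Suc t"]) auto
qed

lemma dyadic_close_odd_odd: "dyadic_close (2 * x + 1) (2 * y + 1) \<longleftrightarrow> x = y"
proof
  assume "dyadic_close (2 * x + 1) (2 * y + 1)"
  then obtain t where t: "2^t dvd 2 * x + 1 \<or> 2^t dvd 2 * y + 1"
    "2 * x + 1 \<le> 2 * y + 1 + 2^t" "2 * y + 1 \<le> 2 * x + 1 + 2^t"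
    unfolding dyadic_close_def by blast
  have "t = 0"
  proof (rule ccontr)
    assume "t \<noteq> 0"
    with t(1) have "even (2 * x + 1) \<or> even (2 * y + 1)" using pow2_dvd_imp_even by blast
    then show False by simp
  qed
  then show "x = y" using t by simp
qed (unfold dyadic_close_def, intro exI[of _ 0], simp)

lemma dyadic_close_double_odd_iff:
  "dyadic_close (2 * x) (2 * y + 1) \<longleftrightarrow>
     (y \<le> x \<and> x \<le> y + 1) \<or> (\<exists>u. 2^u dvd x \<and> x \<le> y + 2^u \<and> y + 1 \<le> x + 2^u)"
proof
  assume "dyadic_close (2 * x) (2 * y + 1)"
  then obtain t where t: "2^t dvd 2 * x \<or> 2^t dvd 2 * y + 1"
    "2 * x \<le> 2 * y + 1 + 2^t" "2 * y + 1 \<le> 2 * x + 2^t"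
    unfolding dyadic_close_def by blast
  show "(y \<le> x \<and> x \<le> y + 1) \<or> (\<exists>u. 2^u dvd x \<and> x \<le> y + 2^u \<and> y + 1 \<le> x + 2^u)"
  proof (cases t)
    case 0
    then show ?thesis using t by simp
  next
    case (Suc s)
    then have "\<not> 2^t dvd 2 * y + 1" using pow2_dvd_imp_even[of t "2 * y + 1"] by auto
    then show ?thesis using t Suc by auto
  qed
next
  assume "(y \<le> x \<and> x \<le> y + 1) \<or> (\<exists>u. 2^u dvd x \<and> x \<le> y + 2^u \<and> y + 1 \<le> x + 2^u)"
  then show "dyadic_close (2 * x) (2 * y + 1)"
    unfolding dyadic_close_def
    by (elim disjE exE conjE; intro exI[of _ 0] exI[of _ "Suc _"]) auto
qed

lemma dyadic_close_Suc_right_above: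
  assumes "dyadic_close x y" "dyadic_close x (y + 1)" "y + 2 \<le> x"
  shows "\<exists>u. 2^u dvd x \<and> x \<le> y + 2^u"
proof -
  obtain t1 where t1: "2^t1 dvd x \<or> 2^t1 dvd y" "x \<le> y + 2^t1"
    using assms(1) unfolding dyadic_close_def by blast
  obtain t2 where t2: "2^t2 dvd x \<or> 2^t2 dvd y + 1" "x \<le> y + 1 + 2^t2"
    using assms(2) unfolding dyadic_close_def by blast
  show ?thesis
  proof (cases "2^t1 dvd x \<or> (2^t2 dvd x \<and> x \<le> y + 2^t2)")
    case True
    then show ?thesis using t1 by blast
  next
    case False
    have "t1 \<noteq> 0" using t1(2) assms(3) by (intro notI) simp
    then have "even y" using False t1(1) pow2_dvd_imp_even by blast
    moreover have "t2 = 0 \<Longrightarrow> x = y + 2" using t2(2) assms(3) by simp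
    moreover have "t2 = 0"
    proof (rule ccontr)
      assume "t2 \<noteq> 0"
      have "\<not> 2^t2 dvd y + 1" using pow2_dvd_imp_even[of t2 "y + 1"] \<open>t2 \<noteq> 0\<close> \<open>even y\<close> by auto
      then have "2^t2 dvd x" and x_eq: "x = y + 1 + 2^t2" using False t2 by auto
      then have "even x" using pow2_dvd_imp_even \<open>t2 \<noteq> 0\<close> by blast
      then show False using x_eq \<open>t2 \<noteq> 0\<close> \<open>even y\<close> by simp
    qed
    ultimately have "x = y + 2" by blast
    with \<open>even y\<close> show ?thesis by (intro exI[of _ 1]) simp
  qed
qed

lemma dyadic_close_Suc_right_below:
  assumes "dyadic_close x y" "dyadic_close x (y + 1)" "x < y"
  shows "\<exists>u. 2^u dvd x \<and> y + 1 \<le> x + 2^u"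
proof -
  obtain t1 where t1: "2^t1 dvd x \<or> 2^t1 dvd y" "y \<le> x + 2^t1"
    using assms(1) unfolding dyadic_close_def by blast
  obtain t2 where t2: "2^t2 dvd x \<or> 2^t2 dvd y + 1" "y + 1 \<le> x + 2^t2"
    using assms(2) unfolding dyadic_close_def by blast
  show ?thesis
  proof (cases "2^t2 dvd x \<or> (2^t1 dvd x \<and> y + 1 \<le> x + 2^t1)")
    case True
    then show ?thesis using t2 by blast
  next
    case False
    have "t2 \<noteq> 0" using t2(2) assms(3) by (intro notI) simp
    then have "even (y + 1)" using False t2(1) pow2_dvd_imp_even by blast
    moreover have "t1 = 0 \<Longrightarrow> y = x + 1" using t1(2) assms(3) by simp
    moreover have "t1 = 0"
    proof (rule ccontr)
      assume "t1 \<noteq> 0"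
      have "\<not> 2^t1 dvd y" using pow2_dvd_imp_even[of t1 "y"] \<open>t1 \<noteq> 0\<close> \<open>even (y + 1)\<close> by auto
      then have "2^t1 dvd x" and x_eq: "y = x + 2^t1" using False t1 by auto
      then have "even x" using pow2_dvd_imp_even \<open>t1 \<noteq> 0\<close> by blast
      then show False using x_eq \<open>t1 \<noteq> 0\<close> \<open>even (y + 1)\<close> by simp
    qed
    ultimately have "y = x + 1" by blast
    with \<open>even (y + 1)\<close> show ?thesis by (intro exI[of _ 1]) simp
  qed
qed

lemma dyadic_close_double_odd:
  "dyadic_close (2 * x) (2 * y + 1) \<longleftrightarrow> dyadic_close x y \<and> dyadic_close x (y + 1)"
proof
  assume "dyadic_close (2 * x) (2 * y + 1)"
  then consider "y \<le> x" "x \<le> y + 1" | u where "2^u dvd x" "x \<le> y + 2^u" "y + 1 \<le> x + 2^u"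
    unfolding dyadic_close_double_odd_iff by blast
  then show "dyadic_close x y \<and> dyadic_close x (y + 1)"
  proof cases
    case 1
    then show ?thesis unfolding dyadic_close_def by (intro conjI exI[of _ 0]) auto
  next
    case 2
    then show ?thesis unfolding dyadic_close_def by (intro conjI exI[of _ u]) auto
  qed
next
  assume close: "dyadic_close x y \<and> dyadic_close x (y + 1)"
  consider "y \<le> x \<and> x \<le> y + 1" | "y + 2 \<le> x" | "x < y" by linarith
  then show "dyadic_close (2 * x) (2 * y + 1)"
    unfolding dyadic_close_double_odd_iff
    using dyadic_close_Suc_right_above[of x y] dyadic_close_Suc_right_below[of x y] close
    by cases auto
qed

lemma f_excess_nonneg_and_eq_0_iff: "0 \<le> f_excess a b \<and> (f_excess a b = 0 \<longleftrightarrow> dyadic_close a b)"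
proof (induction "a + b" arbitrary: a b rule: less_induct)
  case less
  consider "a = 0" | "b = 0" | x y where "a = 2 * x" "b = 2 * y" "x + y < a + b"
    | x y where "a = 2 * x + 1" "b = 2 * y + 1"
    | x y where "a = 2 * x" "b = 2 * y + 1" "x > 0"
    | x y where "a = 2 * x + 1" "b = 2 * y" "y > 0"
    by (metis add_less_mono bot_nat_0.not_eq_extremum evenE less_add_same_cancel1 mult_2 oddE)
  then show ?case
  proof cases
    case 1
    then show ?thesis by simp
  next
    case 2
    then show ?thesis using f_excess_commute dyadic_close_commute by simp
  next
    case 3
    then show ?thesis using less[of x y] f_excess_double_double dyadic_close_double_double by simp
  next
    case 4
    then show ?thesis
      using less[of "x + 1" y] less[of x "y + 1"] f_excess_odd_odd[of x y] dyadic_close_odd_odd[of x y]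
        f_excess_Suc_self[of x] f_excess_commute[of x "x + 1"] by auto
  next
    case 5
    then show ?thesis
      using less[of x y] less[of x "y + 1"] f_excess_even_odd[of x y] dyadic_close_double_odd[of x y]
      by auto
  next
    case 6
    then show ?thesis
      using less[of y x] less[of y "x + 1"] f_excess_even_odd[of y x] dyadic_close_double_odd[of y x]
        f_excess_commute[of a b] dyadic_close_commute[of a b] by auto
  qed
qed

lemma f_add_eq_iff_dyadic_close:
  assumes "b \<le> a"
  shows "f (a + b) = b + f b + f a \<longleftrightarrow> dyadic_close a b"
proof -
  have "f_excess a b = int (f (a + b)) - int (b + f b + f a)"
    unfolding f_excess_def using assms by (simp add: min_absorb2)
  then show ?thesis
    using f_excess_nonneg_and_eq_0_iff[of a b] by (metis eq_iff_diff_eq_0 of_nat_eq_iff)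
qed

lemma clog2_eq_ceillog2: "clog2 n = ceillog2 n"
  unfolding clog2_def ceillog2_def by (simp add: log_def)

lemma d_nonneg: "0 \<le> d i n"
proof -
  have "int (n mod 2^i) < 2^i"
    by (metis mod_less_divisor of_nat_less_iff of_nat_numeral of_nat_power pos2 zero_less_power)
  then show ?thesis unfolding d_def by (cases i) auto
qed

lemma d_Suc_le: "d (Suc t) n \<le> 2^t"
  unfolding d_def by simp

lemma d_Suc_eq:
  assumes "n mod 2^Suc t = r"
  shows "d (Suc t) n = 2^t - \<bar>int r - 2^t\<bar>"
  using assms unfolding d_def by simp

lemma d_less:
  assumes "1 \<le> i" "2^i < 2 * n"
  shows "d i n < int n"
proof -
  obtain t where "i = Suc t" using assms(1) by (cases i) auto
  then have "d i n \<le> 2^t" "(2::nat)^t < n" using d_Suc_le assms(2) by auto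
  then show ?thesis by (metis of_nat_less_iff of_nat_numeral of_nat_power order_le_less_trans)
qed

lemma d_split_bounds:
  assumes "int n = n0 + n1" "\<exists>i\<in>{1..clog2 n}. n0 - n1 = d i n"
  shows "n1 \<le> n0 \<and> 1 \<le> n1"
proof -
  obtain i where i: "1 \<le> i" "i \<le> ceillog2 n" and diff: "n0 - n1 = d i n"
    using assms(2) unfolding clog2_eq_ceillog2 by auto
  then have "n > 0" by (intro Nat.gr0I) simp
  then have "2^i < 2 * n" using ceillog2_ge_iff[of n i] i(2) by simp
  then have "d i n < int n" by (rule d_less[OF i(1)])
  then show ?thesis using assms(1) diff d_nonneg[of i n] by linarith
qed

lemma d_Suc_decomposition:
  assumes "2^t dvd q" "r < 2 * 2^t"
  shows "d (Suc t) (2 * q + r) = 2^t - \<bar>int r - 2^t\<bar>"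
proof -
  from assms(1) obtain c where "q = 2^t * c" by (rule dvdE)
  then have "2 * q + r = r + c * 2^Suc t" by simp
  moreover have "(r + c * 2^Suc t) mod 2^Suc t = r" using assms(2) by simp
  ultimately have "(2 * q + r) mod 2^Suc t = r" by (simp only:)
  then show ?thesis by (rule d_Suc_eq)
qed

lemma dyadic_close_imp_d:
  assumes "1 \<le> b" "b \<le> a" "a + b \<le> 2^k" "dyadic_close a b"
  obtains i where "i \<in> {1..k}" "int a - int b = d i (a + b)"
proof -
  obtain t where t: "2^t dvd a \<or> 2^t dvd b" "a \<le> b + 2^t"
    using assms(4) unfolding dyadic_close_def by blast
  have a_le: "int a \<le> int b + 2^t"
    using t(2) by (metis of_nat_add of_nat_le_iff of_nat_numeral of_nat_power)
  have "2^t \<le> a \<or> 2^t \<le> b"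
    using t(1) assms(1,2) by (meson dvd_imp_le le_trans less_le_trans zero_less_one)
  then have "2^t < (2::nat)^k" using assms by linarith
  then have "Suc t \<in> {1..k}" using power_less_imp_less_exp by fastforce
  moreover have "int a - int b = d (Suc t) (a + b)"
  proof (cases "2^t dvd b")
    case True
    have "(0::nat) < 2^t" by simp
    then have "a + b = 2 * b + (a - b)" "a - b < 2 * 2^t" using assms(2) t(2) by linarith+
    then have "d (Suc t) (a + b) = 2^t - \<bar>int (a - b) - 2^t\<bar>"
      using d_Suc_decomposition[OF True, of "a - b"] by metis
    then show ?thesis using assms(2) a_le by simp
  next
    case False
    then have "2^t dvd a" "b < a" using t(1) assms(2) by (auto simp: le_less)
    then have "2^t \<le> a" by (simp add: dvd_imp_le)
    have "a + b = 2 * (a - 2^t) + (2 * 2^t - (a - b))" "2 * 2^t - (a - b) < 2 * 2^t"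
      using \<open>b < a\<close> \<open>2^t \<le> a\<close> t(2) by auto
    moreover have "2^t dvd a - 2^t" using \<open>2^t dvd a\<close> by (simp add: dvd_diff_nat)
    ultimately show ?thesis
      using d_Suc_decomposition[of t "a - 2^t" "2 * 2^t - (a - b)"] \<open>b < a\<close> a_le by simp
  qed
  ultimately show ?thesis using that by blast
qed

lemma d_imp_dyadic_close:
  assumes "1 \<le> i" "int a - int b = d i (a + b)"
  shows "dyadic_close a b"
proof -
  obtain t where i: "i = Suc t" using assms(1) by (cases i) auto
  define h :: nat where "h = 2^t"
  define q where "q = (a + b) div (2 * h)"
  define r where "r = (a + b) mod (2 * h)"
  have "a + b = 2 * (q * h) + r" unfolding q_def r_def by (metis mult.assoc mult.commute div_mult_mod_eq)
  moreover have "r < 2 * h" unfolding r_def h_def by simp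
  moreover have "2^t dvd q * h" unfolding h_def by simp
  ultimately have ab: "a + b = 2 * (q * h) + r" and d: "int a - int b = int h - \<bar>int r - int h\<bar>"
    using d_Suc_decomposition[of t "q * h" r] assms(2) unfolding i h_def by simp_all
  show ?thesis
  proof (cases "r \<le> h")
    case True
    then have "b = q * h" "a = q * h + r" using ab d by linarith+
    then show ?thesis unfolding dyadic_close_def using True unfolding h_def by (intro exI[of _ t]) auto
  next
    case False
    then have "a = q * h + h" "b + (2 * h - r) = a" using ab d \<open>r < 2 * h\<close> by linarith+
    moreover have "2^t dvd q * h + h" unfolding h_def by simp
    ultimately show ?thesis unfolding dyadic_close_def using False unfolding h_def by (intro exI[of _ t]) auto
  qed
qed

lemma dyadic_close_iff_d:
  assumes "1 \<le> b" "b \<le> a" "a + b \<le> 2^k"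
  shows "dyadic_close a b \<longleftrightarrow> (\<exists>i\<in>{1..k}. int a - int b = d i (a + b))"
proof
  assume "dyadic_close a b"
  then obtain i where "i \<in> {1..k}" "int a - int b = d i (a + b)"
    using dyadic_close_imp_d[OF assms] by blast
  then show "\<exists>i\<in>{1..k}. int a - int b = d i (a + b)" by blast
next
  assume "\<exists>i\<in>{1..k}. int a - int b = d i (a + b)"
  then show "dyadic_close a b" using d_imp_dyadic_close by auto
qed

lemma odd_div_pow2_iff: "odd ((n::nat) div 2^j) \<longleftrightarrow> 2^j \<le> n mod 2^Suc j"
proof -
  have "n mod 2^Suc j = 2^j * ((n div 2^j) mod 2) + n mod 2^j"
    by (metis mod_mult2_eq power_Suc2)
  then show ?thesis
    by (cases "odd (n div 2^j)") (simp_all add: odd_iff_mod_2_eq_one even_iff_mod_2_eq_zero not_le)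
qed

lemma d_Suc_increment:
  "d (Suc j) (Suc n) = d (Suc j) n + (if odd (n div 2^j) then -1 else 1)"
proof -
  define h :: nat where "h = 2^j"
  define r where "r = n mod (2 * h)"
  have "h > 0" unfolding h_def by simp
  then have r_less: "r < 2 * h" unfolding r_def by simp
  have Suc_mod: "Suc n mod (2 * h) = (if r = 2 * h - 1 then 0 else r + 1)"
    unfolding r_def using \<open>h > 0\<close> by (auto simp add: mod_Suc)
  have "odd (n div 2^j) \<longleftrightarrow> h \<le> r"
    unfolding r_def h_def by (simp add: odd_div_pow2_iff)
  moreover have "d (Suc j) n = int h - \<bar>int r - int h\<bar>"
    using d_Suc_eq[of n j r] unfolding r_def h_def by simp
  moreover have "d (Suc j) (Suc n) = int h - \<bar>int (Suc n mod (2 * h)) - int h\<bar>"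
    using d_Suc_eq[of "Suc n" j] unfolding h_def by simp
  ultimately show ?thesis using Suc_mod r_less by auto
qed

lemma card_odd_digit:
  "2 * int (card {m. m < n \<and> odd (m div 2^j)}) = int n - d (Suc j) n"
proof (induction n)
  case 0
  then show ?case unfolding d_def by simp
next
  case (Suc n)
  have "{m. m < Suc n \<and> odd (m div 2^j)} =
        {m. m < n \<and> odd (m div 2^j)} \<union> (if odd (n div 2^j) then {n} else {})"
    by (auto simp: less_Suc_eq)
  then have "card {m. m < Suc n \<and> odd (m div 2^j)} =
             card {m. m < n \<and> odd (m div 2^j)} + (if odd (n div 2^j) then 1 else 0)"
    by simp
  then show ?case using Suc.IH d_Suc_increment[of j n] by simp
qed

lemma card_beta:
  "card {m. m < n \<and> beta k m i = 0} + card {m. m < n \<and> beta k m i = 1} = n"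
  "int (card {m. m < n \<and> beta k m i = 0}) - int (card {m. m < n \<and> beta k m i = 1}) =
     d (Suc (k - i)) n"
proof -
  let ?A = "{m. m < n \<and> beta k m i = 0}"
  let ?B = "{m. m < n \<and> beta k m i = 1}"
  have "?A \<union> ?B = {..<n}" "?A \<inter> ?B = {}" unfolding beta_def by auto
  then show sum: "card ?A + card ?B = n"
    by (metis card_Un_disjoint card_lessThan finite_Un finite_lessThan)
  have "?B = {m. m < n \<and> odd (m div 2^(k - i))}"
    unfolding beta_def by (auto simp: odd_iff_mod_2_eq_one)
  then have "2 * int (card ?B) = int n - d (Suc (k - i)) n"
    using card_odd_digit[of n "k - i"] by simp
  moreover have "int (card ?A) + int (card ?B) = int n"
    using sum by (metis of_nat_add)
  ultimately show "int (card ?A) - int (card ?B) = d (Suc (k - i)) n"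
    by linarith
qed

lemma HCBP_iff_d:
  assumes "int n = n0 + n1"
  shows "HCBP n n0 n1 \<longleftrightarrow> (\<exists>i\<in>{1..clog2 n}. n0 - n1 = d i n)"
proof -
  let ?k = "clog2 n"
  have sides:
    "(int (card {m. m < n \<and> beta ?k m i = 0}) = n0 \<and> int (card {m. m < n \<and> beta ?k m i = 1}) = n1) \<or>
     (int (card {m. m < n \<and> beta ?k m i = 0}) = n1 \<and> int (card {m. m < n \<and> beta ?k m i = 1}) = n0)
     \<longleftrightarrow> n0 - n1 = d (Suc (?k - i)) n" if "n1 \<le> n0" for i
    using that assms(1) card_beta[of n ?k i] d_nonneg[of "Suc (?k - i)" n] by linarith
  have reflect: "Suc (?k - i) \<in> {1..?k} \<and> Suc (?k - Suc (?k - i)) = i" if "i \<in> {1..?k}" for i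
    using that by auto
  have "HCBP n n0 n1 \<longleftrightarrow> n1 \<le> n0 \<and> 1 \<le> n1 \<and> (\<exists>i\<in>{1..?k}. n0 - n1 = d (Suc (?k - i)) n)"
    unfolding HCBP_def Let_def using assms(1) sides by auto
  also have "\<dots> \<longleftrightarrow> n1 \<le> n0 \<and> 1 \<le> n1 \<and> (\<exists>i\<in>{1..?k}. n0 - n1 = d i n)"
    using reflect by metis
  also have "\<dots> \<longleftrightarrow> (\<exists>i\<in>{1..?k}. n0 - n1 = d i n)"
    using d_split_bounds[OF assms(1)] by blast
  finally show ?thesis .
qed

lemma f_split_iff_d:
  assumes "int n = n0 + n1"
  shows "(int (f n) = n1 + int (f (nat n1)) + int (f (nat n0)) \<and> n1 \<le> n0 \<and> 1 \<le> n1) \<longleftrightarrow>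
         (\<exists>i\<in>{1..clog2 n}. n0 - n1 = d i n)"
proof -
  have "int (f n) = n1 + int (f (nat n1)) + int (f (nat n0)) \<longleftrightarrow>
      (\<exists>i\<in>{1..clog2 n}. n0 - n1 = d i n)" if "n1 \<le> n0" "1 \<le> n1"
  proof -
    from that have "0 \<le> n0" "0 \<le> n1" by linarith+
    then obtain a b where "n0 = int a" "n1 = int b" by (metis zero_le_imp_eq_int)
    then have ab: "n0 = int a" "n1 = int b" "n = a + b" "1 \<le> b" "b \<le> a"
      using that assms(1) by simp_all
    have "int (f n) = n1 + int (f (nat n1)) + int (f (nat n0)) \<longleftrightarrow> int (f (a + b)) = int (b + f b + f a)"
      using ab by simp
    also have "\<dots> \<longleftrightarrow> f (a + b) = b + f b + f a"
      by (rule of_nat_eq_iff)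
    also have "\<dots> \<longleftrightarrow> dyadic_close a b"
      using ab by (intro f_add_eq_iff_dyadic_close)
    also have "\<dots> \<longleftrightarrow> (\<exists>i\<in>{1..clog2 n}. int a - int b = d i (a + b))"
      using ab le_two_power_ceillog2[of n] unfolding clog2_eq_ceillog2 by (intro dyadic_close_iff_d) auto
    finally show ?thesis using ab by simp
  qed
  then show ?thesis using d_split_bounds[OF assms(1)] by blast
qed

lemma sum_halves_iff_diff:
  fixes x y s D :: real
  assumes "s = x + y"
  shows "x = (s + D) / 2 \<and> y = (s - D) / 2 \<longleftrightarrow> x - y = D"
  using assms by (intro iffI) (simp_all add: field_simps)

theorem theorem13:
  fixes n :: nat and n0 n1 :: int
  assumes "n \<ge> 2" and "int n = n0 + n1"
  shows "(HCBP n n0 n1 \<longleftrightarrow>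
           (int (f n) = n1 + int (f (nat n1)) + int (f (nat n0)) \<and> n0 \<ge> n1 \<and> n1 \<ge> 1))
       \<and> (HCBP n n0 n1 \<longleftrightarrow>
           (\<exists>i\<in>{1..clog2 n}. real_of_int n0 = (real n + real_of_int (d i n)) / 2
                           \<and> real_of_int n1 = (real n - real_of_int (d i n)) / 2))"
proof -
  have "real n = real_of_int n0 + real_of_int n1"
    using assms(2) by (metis of_int_add of_int_of_nat_eq)
  then have "real_of_int n0 = (real n + real_of_int (d i n)) / 2 \<and>
             real_of_int n1 = (real n - real_of_int (d i n)) / 2 \<longleftrightarrow>
             real_of_int n0 - real_of_int n1 = real_of_int (d i n)" for i
    by (rule sum_halves_iff_diff)
  then have "real_of_int n0 = (real n + real_of_int (d i n)) / 2 \<and>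
             real_of_int n1 = (real n - real_of_int (d i n)) / 2 \<longleftrightarrow> n0 - n1 = d i n" for i
    by (simp only: of_int_diff [symmetric] of_int_eq_iff)
  then show ?thesis
    using HCBP_iff_d[OF assms(2)] f_split_iff_d[OF assms(2)] by auto
qed

end
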